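(* Let $(X,m)$ be a $\sigma$-finite measure space, let $1<p<\infty$, let $\gamma>0$, and let $\{T_t:t>0\}$ be a one-parameter family of sublinear operators on $L^p(X,m)$ (i.e. $|T_t(f+h)|\le|T_tf|+|T_th|$ and $|T_t(cf)|=|c||T_tf|$), with $(x,t)\mapsto T_tf(x)$ measurable for each $f$. Assume there is $C_p>0$ with $\|\sup_{t>0}|T_tf|\|_{L^p(X,m)}\le C_p\|f\|_{L^p(X,m)}$ for all $f\in L^p(X,m)$, and that $\lim_{t\to0+}T_tf(x)=f(x)$ for $m$-a.e. $x$, for all $f$ in a dense subclass of $L^p(X,m)$. Then for every $f\in L^p(X,m)$, with $$E_{\lambda,\gamma/p}=\{(x,t)\in X\times(0,\infty):|T_tf(x)|>\lambda t^{\gamma/p}\},$$ the limit below exists and $$\frac1\gamma\|f\|_{L^p(X,m)}^p\le\lim_{\lambda\to\infty}\lambda^p\iint_{E_{\lambda,\gamma/p}}t^{\gamma-1}\,dt\,dm(x)\le\sup_{\lambda>0}\lambda^p\iint_{E_{\lambda,\gamma/p}}t^{\gamma-1}\,dt\,dm(x)\le\frac{C_p^p}{\gamma}\|f\|_{L^p(X,m)}^p.$$ *)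

theory Defs
  imports "HOL-Analysis.Analysis"
begin

definition Lp_space :: "'a measure \<Rightarrow> real \<Rightarrow> ('a \<Rightarrow> real) set" where
  "Lp_space M p = {f. f \<in> borel_measurable M \<and> integrable M (\<lambda>x. \<bar>f x\<bar> powr p)}"

definition Lp_norm :: "'a measure \<Rightarrow> real \<Rightarrow> ('a \<Rightarrow> real) \<Rightarrow> real" where
  "Lp_norm M p f = (\<integral>x. \<bar>f x\<bar> powr p \<partial>M) powr (1 / p)"

definition epow :: "ennreal \<Rightarrow> real \<Rightarrow> ennreal" where
  "epow a p = (if a = \<infinity> then \<infinity> else ennreal (enn2real a powr p))"

definition maximal_fun :: "(real \<Rightarrow> ('a \<Rightarrow> real) \<Rightarrow> 'a \<Rightarrow> real) \<Rightarrow> ('a \<Rightarrow> real) \<Rightarrow> 'a \<Rightarrow> ennreal" where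
  "maximal_fun T f x = (SUP t\<in>{0<..}. ennreal \<bar>T t f x\<bar>)"

definition E_set :: "(real \<Rightarrow> ('a \<Rightarrow> real) \<Rightarrow> 'a \<Rightarrow> real) \<Rightarrow> ('a \<Rightarrow> real) \<Rightarrow> real \<Rightarrow> real \<Rightarrow> ('a \<times> real) set" where
  "E_set T f lam s = {(x, t). 0 < t \<and> \<bar>T t f x\<bar> > lam * t powr s}"

definition level_integral ::
  "'a measure \<Rightarrow> (real \<Rightarrow> ('a \<Rightarrow> real) \<Rightarrow> 'a \<Rightarrow> real) \<Rightarrow> ('a \<Rightarrow> real) \<Rightarrow> real \<Rightarrow> real \<Rightarrow> real \<Rightarrow> ennreal" where
  "level_integral M T f p \<gamma> lam =
     ennreal (lam powr p) *
     (\<integral>\<^sup>+ x. (\<integral>\<^sup>+ t. indicator (E_set T f lam (\<gamma> / p)) (x, t) * ennreal (t powr (\<gamma> - 1)) \<partial>lborel) \<partial>M)"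

end

theory Submission
  imports Defs
begin

text \<open>
  If \<open>|T\<^sub>t f(x)| \<le> R(x)\<close> for almost every t > 0, then the t-section of
  \<open>E\<^sub>\<lambda>\<^sub>,\<^sub>\<gamma>\<^sub>/\<^sub>p\<close> lies in \<open>(0, (R(x)/\<lambda>)\<^bsup>p/\<gamma>\<^esup>)\<close>, whose \<open>t\<^bsup>\<gamma>-1\<^esup> dt\<close>-measure is
  \<open>R(x)\<^sup>p / (\<gamma> \<lambda>\<^sup>p)\<close>. With R the essential supremum of \<open>|T\<^sub>t f(x)|\<close> over t > 0, the
  maximal inequality yields the upper bound \<open>C\<^sup>p \<parallel>f\<parallel>\<^sup>p / \<gamma>\<close> for every \<lambda>. If moreover
  \<open>T\<^sub>t f(x) \<rightarrow> f(x)\<close>, the same computation near t = 0 shows that the x-integrand tends to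
  \<open>|f(x)|\<^sup>p / \<gamma>\<close>, and dominated convergence gives the limit \<open>\<parallel>f\<parallel>\<^sup>p / \<gamma>\<close>.
  A general f is approximated by such g: by subadditivity the level set of f at level \<lambda> is
  covered by those of g at level \<open>(1-e)\<lambda>\<close> and of f - g at level \<open>e\<lambda>\<close>. The weak-type bound for
  f - g and convexity of \<open>|\<cdot>|\<^sup>p\<close> then squeeze the upper and lower limits for f, up to errors that
  vanish when first \<open>\<parallel>f - g\<parallel> \<rightarrow> 0\<close> and then \<open>e \<rightarrow> 0\<close>.
\<close>

section \<open>The level integral in the variable t\<close>

lemma nn_integral_powr_Ioo:
  fixes b g :: real
  assumes "b \<ge> 0" "g > 0"
  shows "(\<integral>\<^sup>+t. indicator {0<..<b} t * ennreal (t powr (g - 1)) \<partial>lborel) = ennreal (b powr g / g)"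
proof -
  have "((\<lambda>x. x powr (g - 1)) has_integral (b powr (g - 1 + 1) / (g - 1 + 1))) {0..b}"
    by (rule has_integral_powr_from_0) (use assms in auto)
  then have "((\<lambda>x. x powr (g - 1)) has_integral (b powr g / g)) {0<..<b}"
    by (simp add: has_integral_Icc_iff_Ioo)
  from nn_integral_has_integral_lebesgue[OF _ this]
  have "(\<integral>\<^sup>+x. ennreal (indicator {0<..<b} x * x powr (g - 1)) \<partial>lborel) = ennreal (b powr g / g)"
    by simp
  then show ?thesis by (simp add: indicator_mult_ennreal mult.commute)
qed

lemma powr_less_mono2_iff:
  fixes x y a :: real
  assumes "a > 0" "x \<ge> 0" "y \<ge> 0"
  shows "x powr a < y powr a \<longleftrightarrow> x < y"
  using assms powr_less_mono2[of a x y] powr_mono2[of a y x] by (auto simp: not_less[symmetric])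

text \<open>The inner t-integral of \<^const>\<open>level_integral\<close> at a fixed point x, for \<open>u t = T t f x\<close>.\<close>

definition level_integral_line :: "real \<Rightarrow> real \<Rightarrow> (real \<Rightarrow> real) \<Rightarrow> real \<Rightarrow> ennreal" where
  "level_integral_line p \<gamma> u lam =
     ennreal (lam powr p) *
     (\<integral>\<^sup>+t. indicator {t. 0 < t \<and> lam * t powr (\<gamma> / p) < \<bar>u t\<bar>} t * ennreal (t powr (\<gamma> - 1)) \<partial>lborel)"

context
  fixes p \<gamma> lam c :: real
  assumes p: "p > 0" and gamma: "\<gamma> > 0" and lam: "lam > 0" and c: "c \<ge> 0"
begin

lemma less_threshold_iff:
  assumes "t > 0"
  shows "lam * t powr (\<gamma> / p) < c \<longleftrightarrow> t < (c / lam) powr (p / \<gamma>)"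
proof -
  have "lam * t powr (\<gamma> / p) < c \<longleftrightarrow> t powr (\<gamma> / p) < c / lam"
    using lam by (simp add: field_simps)
  also have "\<dots> \<longleftrightarrow> (t powr (\<gamma> / p)) powr (p / \<gamma>) < (c / lam) powr (p / \<gamma>)"
    using p gamma lam c assms by (simp add: powr_less_mono2_iff)
  also have "(t powr (\<gamma> / p)) powr (p / \<gamma>) = t"
    using p gamma assms by (simp add: powr_powr)
  finally show ?thesis .
qed

lemma level_integral_threshold:
  "ennreal (lam powr p) *
     (\<integral>\<^sup>+t. indicator {0<..<(c / lam) powr (p / \<gamma>)} t * ennreal (t powr (\<gamma> - 1)) \<partial>lborel)
   = ennreal (c powr p / \<gamma>)"
proof -
  have "((c / lam) powr (p / \<gamma>)) powr \<gamma> = c powr p / lam powr p"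
    using p gamma lam c by (simp add: powr_powr powr_divide)
  then show ?thesis
    using p gamma lam c by (simp add: nn_integral_powr_Ioo ennreal_mult[symmetric])
qed

lemma level_integral_line_le:
  assumes "AE t in lborel. 0 < t \<longrightarrow> lam * t powr (\<gamma> / p) < \<bar>u t\<bar> \<longrightarrow> lam * t powr (\<gamma> / p) < c"
  shows "level_integral_line p \<gamma> u lam \<le> ennreal (c powr p / \<gamma>)"
proof -
  have "(\<integral>\<^sup>+t. indicator {t. 0 < t \<and> lam * t powr (\<gamma> / p) < \<bar>u t\<bar>} t * ennreal (t powr (\<gamma> - 1)) \<partial>lborel)
      \<le> (\<integral>\<^sup>+t. indicator {0<..<(c / lam) powr (p / \<gamma>)} t * ennreal (t powr (\<gamma> - 1)) \<partial>lborel)"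
    using assms by (intro nn_integral_mono_AE) (auto elim!: eventually_mono
        simp: indicator_def less_threshold_iff)
  then show ?thesis
    unfolding level_integral_line_def level_integral_threshold[symmetric]
    by (rule mult_left_mono) simp
qed

lemma level_integral_line_ge:
  assumes "\<And>t. 0 < t \<Longrightarrow> lam * t powr (\<gamma> / p) < c \<Longrightarrow> lam * t powr (\<gamma> / p) < \<bar>u t\<bar>"
  shows "ennreal (c powr p / \<gamma>) \<le> level_integral_line p \<gamma> u lam"
proof -
  have "(\<integral>\<^sup>+t. indicator {0<..<(c / lam) powr (p / \<gamma>)} t * ennreal (t powr (\<gamma> - 1)) \<partial>lborel)
      \<le> (\<integral>\<^sup>+t. indicator {t. 0 < t \<and> lam * t powr (\<gamma> / p) < \<bar>u t\<bar>} t * ennreal (t powr (\<gamma> - 1)) \<partial>lborel)"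
    using assms by (intro nn_integral_mono) (auto simp: indicator_def less_threshold_iff)
  then show ?thesis
    unfolding level_integral_line_def level_integral_threshold[symmetric]
    by (rule mult_left_mono) simp
qed

end

context
  fixes p \<gamma> :: real and u :: "real \<Rightarrow> real"
  assumes p: "p > 0" and gamma: "\<gamma> > 0"
begin

lemma less_of_level_less:
  assumes "lam > 0" "t0 > 0" "b \<le> lam * t0 powr (\<gamma> / p)" "lam * t powr (\<gamma> / p) < b"
  shows "t < t0"
proof (rule ccontr)
  assume "\<not> t < t0"
  then have "lam * t0 powr (\<gamma> / p) \<le> lam * t powr (\<gamma> / p)"
    using assms p gamma by (intro mult_left_mono powr_mono2) auto
  with assms show False by linarith
qed

lemma eventually_level_integral_line_ge:
  assumes c: "0 \<le> c" "c < \<bar>a\<bar>" and lim: "(u \<longlongrightarrow> a) (at_right 0)"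
  shows "eventually (\<lambda>lam. ennreal (c powr p / \<gamma>) \<le> level_integral_line p \<gamma> u lam) at_top"
proof -
  have "eventually (\<lambda>t. c < \<bar>u t\<bar>) (at_right 0)"
    using order_tendstoD(1)[OF tendsto_rabs[OF lim] c(2)] .
  then obtain t0 where t0: "t0 > 0" "\<And>t. 0 < t \<Longrightarrow> t < t0 \<Longrightarrow> c < \<bar>u t\<bar>"
    unfolding eventually_at_right_field by auto
  show ?thesis
  proof (rule eventually_at_top_linorderI[of "max 1 (c / t0 powr (\<gamma> / p))"])
    fix lam assume lam: "max 1 (c / t0 powr (\<gamma> / p)) \<le> lam"
    then have lam0: "lam > 0" by simp
    have c_le: "c \<le> lam * t0 powr (\<gamma> / p)"
      using lam t0 by (simp add: field_simps)
    show "ennreal (c powr p / \<gamma>) \<le> level_integral_line p \<gamma> u lam"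
    proof (rule level_integral_line_ge[OF p gamma lam0 c(1)])
      fix t assume t: "0 < t" "lam * t powr (\<gamma> / p) < c"
      with t0(2)[OF t(1) less_of_level_less[OF lam0 t0(1) c_le t(2)]]
      show "lam * t powr (\<gamma> / p) < \<bar>u t\<bar>"
        by linarith
    qed
  qed
qed

lemma eventually_level_integral_line_le:
  assumes c: "\<bar>a\<bar> < c" and lim: "(u \<longlongrightarrow> a) (at_right 0)"
    and bounded: "AE t in lborel. 0 < t \<longrightarrow> \<bar>u t\<bar> \<le> r"
  shows "eventually (\<lambda>lam. level_integral_line p \<gamma> u lam \<le> ennreal (c powr p / \<gamma>)) at_top"
proof -
  have "eventually (\<lambda>t. \<bar>u t\<bar> < c) (at_right 0)"
    using order_tendstoD(2)[OF tendsto_rabs[OF lim] c] .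
  then obtain t0 where t0: "t0 > 0" "\<And>t. 0 < t \<Longrightarrow> t < t0 \<Longrightarrow> \<bar>u t\<bar> < c"
    unfolding eventually_at_right_field by auto
  show ?thesis
  proof (rule eventually_at_top_linorderI[of "max 1 (\<bar>r\<bar> / t0 powr (\<gamma> / p))"])
    fix lam assume lam: "max 1 (\<bar>r\<bar> / t0 powr (\<gamma> / p)) \<le> lam"
    then have lam0: "lam > 0" by simp
    have r_le: "\<bar>r\<bar> \<le> lam * t0 powr (\<gamma> / p)"
      using lam t0 by (simp add: field_simps)
    have c0: "c \<ge> 0" using c by linarith
    show "level_integral_line p \<gamma> u lam \<le> ennreal (c powr p / \<gamma>)"
    proof (rule level_integral_line_le[OF p gamma lam0 c0])
      show "AE t in lborel. 0 < t \<longrightarrow> lam * t powr (\<gamma> / p) < \<bar>u t\<bar> \<longrightarrow> lam * t powr (\<gamma> / p) < c"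
        using bounded
      proof eventually_elim
        case (elim t)
        show ?case
        proof (intro impI)
          assume t: "0 < t" "lam * t powr (\<gamma> / p) < \<bar>u t\<bar>"
          with elim have "lam * t powr (\<gamma> / p) < \<bar>r\<bar>"
            by linarith
          with t0(2)[OF t(1) less_of_level_less[OF lam0 t0(1) r_le]] t(2)
          show "lam * t powr (\<gamma> / p) < c"
            by linarith
        qed
      qed
    qed
  qed
qed

lemma tendsto_level_integral_line:
  assumes lim: "(u \<longlongrightarrow> a) (at_right 0)"
    and bounded: "AE t in lborel. 0 < t \<longrightarrow> \<bar>u t\<bar> \<le> r"
  shows "(level_integral_line p \<gamma> u \<longlongrightarrow> ennreal (\<bar>a\<bar> powr p / \<gamma>)) at_top"
proof -
  have cont: "((\<lambda>c. ennreal (c powr p / \<gamma>)) \<longlongrightarrow> ennreal (\<bar>a\<bar> powr p / \<gamma>)) (at \<bar>a\<bar> within S)"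
    if "\<forall>\<^sub>F c in at \<bar>a\<bar> within S. 0 \<le> c" for S
    using p gamma that by (intro tendsto_ennrealI tendsto_intros) auto
  show ?thesis
  proof (rule order_tendstoI)
    fix y assume y: "y < ennreal (\<bar>a\<bar> powr p / \<gamma>)"
    then have "\<bar>a\<bar> > 0"
      using p by (cases "a = 0") auto
    then have "\<forall>\<^sub>F c in at_left \<bar>a\<bar>. 0 < c \<and> c < \<bar>a\<bar>"
      using eventually_at_left_real by force
    moreover from this have "\<forall>\<^sub>F c in at_left \<bar>a\<bar>. y < ennreal (c powr p / \<gamma>)"
      by (intro order_tendstoD(1)[OF cont y]) (auto elim: eventually_mono)
    ultimately obtain c where c: "0 < c" "c < \<bar>a\<bar>" "y < ennreal (c powr p / \<gamma>)"
      using eventually_happens[OF eventually_conj] by force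
    show "\<forall>\<^sub>F lam in at_top. y < level_integral_line p \<gamma> u lam"
      using eventually_level_integral_line_ge[OF _ c(2) lim] c by (auto elim: eventually_mono)
  next
    fix y assume y: "ennreal (\<bar>a\<bar> powr p / \<gamma>) < y"
    have right: "\<forall>\<^sub>F c in at_right \<bar>a\<bar>. \<bar>a\<bar> < c"
      by (rule eventually_at_right_less)
    then have "\<forall>\<^sub>F c in at_right \<bar>a\<bar>. ennreal (c powr p / \<gamma>) < y"
      by (intro order_tendstoD(2)[OF cont y]) (auto elim: eventually_mono)
    with right obtain c where c: "\<bar>a\<bar> < c" "ennreal (c powr p / \<gamma>) < y"
      using eventually_happens[OF eventually_conj] by force
    show "\<forall>\<^sub>F lam in at_top. level_integral_line p \<gamma> u lam < y"
      using eventually_level_integral_line_le[OF c(1) lim bounded] c by (auto elim: eventually_mono)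
  qed
qed

end

section \<open>An essential supremum in t\<close>

text \<open>
  Measurability of \<open>T\<close> is only assumed for t > 0; extending by the value at t = 1 yields a
  function on the full product, where the measurability prover applies.
\<close>

lemma measurable_extend_to_nonpositive:
  fixes v :: "'a \<Rightarrow> real \<Rightarrow> real"
  assumes "(\<lambda>(x, t). v x t) \<in> borel_measurable (M \<Otimes>\<^sub>M restrict_space lborel {0<..})"
  shows "(\<lambda>z. v (fst z) (if 0 < snd z then snd z else 1)) \<in> borel_measurable (M \<Otimes>\<^sub>M lborel)"
proof -
  have "(\<lambda>z. (fst z, if 0 < snd z then snd z else (1::real))) \<in> M \<Otimes>\<^sub>M lborel \<rightarrow>\<^sub>M M \<Otimes>\<^sub>M restrict_space lborel {0<..}"
    by (intro measurable_Pair measurable_restrict_space2) auto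
  from measurable_comp[OF this assms] show ?thesis
    by (simp add: o_def)
qed

lemma sets_exceedance:
  fixes v :: "'a \<Rightarrow> real \<Rightarrow> real"
  assumes "(\<lambda>(x, t). v x t) \<in> borel_measurable (M \<Otimes>\<^sub>M restrict_space lborel {0<..})"
  shows "{z \<in> space (M \<Otimes>\<^sub>M lborel). 0 < snd z \<and> c < \<bar>v (fst z) (snd z)\<bar>} \<in> sets (M \<Otimes>\<^sub>M lborel)"
proof -
  note [measurable] = measurable_extend_to_nonpositive[OF assms]
  have "{z \<in> space (M \<Otimes>\<^sub>M lborel). 0 < snd z \<and> c < \<bar>v (fst z) (snd z)\<bar>} =
        {z \<in> space (M \<Otimes>\<^sub>M lborel). 0 < snd z \<and> c < \<bar>v (fst z) (if 0 < snd z then snd z else 1)\<bar>}"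
    by auto
  also have "\<dots> \<in> sets (M \<Otimes>\<^sub>M lborel)"
    by measurable
  finally show ?thesis .
qed

text \<open>
  A measurable substitute for \<^const>\<open>maximal_fun\<close>, whose own measurability is not assumed:
  the essential supremum of \<open>|v x t|\<close> over t > 0, computed along rational levels.
\<close>

definition ess_bound :: "('a \<Rightarrow> real \<Rightarrow> real) \<Rightarrow> 'a \<Rightarrow> ennreal" where
  "ess_bound v x = (INF q. if emeasure lborel {t. 0 < t \<and> real_of_rat q < \<bar>v x t\<bar>} = 0
                           then ennreal (real_of_rat q) else \<infinity>)"

context
  fixes M :: "'a measure" and v :: "'a \<Rightarrow> real \<Rightarrow> real"
  assumes meas: "(\<lambda>(x, t). v x t) \<in> borel_measurable (M \<Otimes>\<^sub>M restrict_space lborel {0<..})"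
begin

lemma exceedance_section:
  assumes "x \<in> space M"
  shows "{t. 0 < t \<and> c < \<bar>v x t\<bar>} =
         Pair x -` {z \<in> space (M \<Otimes>\<^sub>M lborel). 0 < snd z \<and> c < \<bar>v (fst z) (snd z)\<bar>}"
  using assms by (auto simp: space_pair_measure)

lemma borel_measurable_ess_bound: "ess_bound v \<in> borel_measurable M"
proof -
  have [measurable]: "(\<lambda>x. emeasure lborel {t. 0 < t \<and> c < \<bar>v x t\<bar>}) \<in> borel_measurable M" for c
    using lborel.measurable_emeasure_Pair[OF sets_exceedance[OF meas, of c]]
    by (rule measurable_cong[THEN iffD1, rotated]) (simp add: exceedance_section)
  show ?thesis
    unfolding ess_bound_def by measurable
qed

lemma AE_abs_le_ess_bound:
  assumes x: "x \<in> space M" and fin: "ess_bound v x < \<infinity>"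
  shows "AE t in lborel. 0 < t \<longrightarrow> \<bar>v x t\<bar> \<le> enn2real (ess_bound v x)"
proof -
  have "AE t in lborel. 0 < t \<longrightarrow> \<bar>v x t\<bar> \<le> real_of_rat q"
    if "emeasure lborel {t. 0 < t \<and> real_of_rat q < \<bar>v x t\<bar>} = 0" for q
  proof (rule AE_I')
    have "{t. 0 < t \<and> real_of_rat q < \<bar>v x t\<bar>} \<in> sets lborel"
      unfolding exceedance_section[OF x] by (rule sets_Pair1, rule sets_exceedance[OF meas])
    with that show "{t. 0 < t \<and> real_of_rat q < \<bar>v x t\<bar>} \<in> null_sets lborel" ..
  qed (auto simp: not_le)
  then have "AE t in lborel. \<forall>q. emeasure lborel {t. 0 < t \<and> real_of_rat q < \<bar>v x t\<bar>} = 0 \<longrightarrow>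
                                   0 < t \<longrightarrow> \<bar>v x t\<bar> \<le> real_of_rat q"
    unfolding AE_all_countable by (metis (mono_tags, lifting) AE_I2 eventually_mono)
  then show ?thesis
  proof eventually_elim
    case (elim t)
    show ?case
    proof
      assume t: "0 < t"
      have "ennreal \<bar>v x t\<bar> \<le> ess_bound v x"
        unfolding ess_bound_def using elim t by (intro INF_greatest) (auto intro: ennreal_leI)
      also have "\<dots> = ennreal (enn2real (ess_bound v x))"
        using fin by simp
      finally show "\<bar>v x t\<bar> \<le> enn2real (ess_bound v x)"
        by (simp add: ennreal_le_iff)
    qed
  qed
qed

end

lemma ess_bound_le_SUP: "ess_bound v x \<le> (SUP t\<in>{0<..}. ennreal \<bar>v x t\<bar>)"
proof (cases "SUP t\<in>{0<..}. ennreal \<bar>v x t\<bar>" rule: ennreal_cases)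
  case (real m)
  have bound: "\<bar>v x t\<bar> \<le> m" if "0 < t" for t
    using SUP_upper[of t "{0<..}" "\<lambda>t. ennreal \<bar>v x t\<bar>"] that real by (simp add: ennreal_le_iff)
  then have le_rat: "ess_bound v x \<le> ennreal (real_of_rat q)" if "m < real_of_rat q" for q
  proof -
    have empty: "{t. 0 < t \<and> real_of_rat q < \<bar>v x t\<bar>} = {}"
      using that bound by force
    show ?thesis
      unfolding ess_bound_def by (rule INF_lower2[of q]) (simp_all add: empty)
  qed
  show ?thesis
  proof (rule ennreal_le_epsilon)
    fix e :: real assume "0 < e"
    then obtain q where q: "m < real_of_rat q" "real_of_rat q < m + e"
      using of_rat_dense[of m "m + e"] by auto
    have "ess_bound v x \<le> ennreal (m + e)"
      using le_rat[OF q(1)] q(2) by (meson ennreal_leI less_imp_le order_trans)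
    then show "ess_bound v x \<le> (SUP t\<in>{0<..}. ennreal \<bar>v x t\<bar>) + ennreal e"
      using real \<open>0 < e\<close> by (simp add: ennreal_plus)
  qed
next
  case top
  then show ?thesis by (metis top_greatest)
qed

section \<open>Convexity estimates in \<open>L\<^sup>p\<close>\<close>

lemma convex_on_powr_nonneg:
  fixes p :: real
  assumes p: "p \<ge> 1"
  shows "convex_on {0..} (\<lambda>x. x powr p)"
proof (rule convex_on_linorderI)
  fix t x y :: real
  assume t: "0 < t" "t < 1" and xy: "x \<in> {0..}" "y \<in> {0..}" "x < y"
  show "((1 - t) *\<^sub>R x + t *\<^sub>R y) powr p \<le> (1 - t) * x powr p + t * y powr p"
  proof (cases "x = 0")
    case True
    have "t powr p \<le> t powr 1"
      using t p by (intro powr_mono') auto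
    then show ?thesis
      using True t xy by (simp add: powr_mult mult_right_mono)
  next
    case False
    with xy have "x \<in> {0<..}" "y \<in> {0<..}" by auto
    with convex_onD[OF powr_convex[OF p]] t show ?thesis by simp
  qed
qed simp

lemma abs_add_powr_le_convex:
  fixes u v p e :: real
  assumes p: "p \<ge> 1" and e: "0 < e" "e < 1"
  shows "\<bar>u + v\<bar> powr p \<le> (1 - e) powr (1 - p) * \<bar>u\<bar> powr p + e powr (1 - p) * \<bar>v\<bar> powr p"
proof -
  have "\<bar>u + v\<bar> powr p \<le> (\<bar>u\<bar> + \<bar>v\<bar>) powr p"
    using p by (intro powr_mono2) (auto intro: abs_triangle_ineq)
  also have "\<bar>u\<bar> + \<bar>v\<bar> = (1 - e) * (\<bar>u\<bar> / (1 - e)) + e * (\<bar>v\<bar> / e)"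
    using e by simp
  also have "((1 - e) * (\<bar>u\<bar> / (1 - e)) + e * (\<bar>v\<bar> / e)) powr p
      \<le> (1 - e) * (\<bar>u\<bar> / (1 - e)) powr p + e * (\<bar>v\<bar> / e) powr p"
    using convex_onD[OF convex_on_powr_nonneg[OF p], of e "\<bar>u\<bar> / (1 - e)" "\<bar>v\<bar> / e"] e by simp
  also have "(1 - e) * (\<bar>u\<bar> / (1 - e)) powr p = (1 - e) powr (1 - p) * \<bar>u\<bar> powr p"
    using e by (simp add: powr_divide powr_diff field_simps)
  also have "e * (\<bar>v\<bar> / e) powr p = e powr (1 - p) * \<bar>v\<bar> powr p"
    using e by (simp add: powr_divide powr_diff field_simps)
  finally show ?thesis .
qed

lemma Lp_norm_powr: "p > 0 \<Longrightarrow> Lp_norm M p f powr p = (\<integral>x. \<bar>f x\<bar> powr p \<partial>M)"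
  unfolding Lp_norm_def by (simp add: powr_powr integral_nonneg_AE)

lemma Lp_norm_diff_commute: "Lp_norm M p (\<lambda>x. f x - g x) = Lp_norm M p (\<lambda>x. g x - f x)"
  unfolding Lp_norm_def by (simp add: abs_minus_commute)

context
  fixes M :: "'a measure" and p e :: real and f g :: "'a \<Rightarrow> real"
  assumes f: "f \<in> Lp_space M p" and g: "g \<in> Lp_space M p" and p: "p \<ge> 1" and e: "0 < e" "e < 1"
begin

lemma integrable_convex_bound:
  "integrable M (\<lambda>x. (1 - e) powr (1 - p) * \<bar>f x\<bar> powr p + e powr (1 - p) * \<bar>g x\<bar> powr p)"
  using f g by (auto simp: Lp_space_def)

lemma Lp_space_add: "(\<lambda>x. f x + g x) \<in> Lp_space M p"
proof -
  have [measurable]: "f \<in> borel_measurable M" "g \<in> borel_measurable M"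
    using f g by (auto simp: Lp_space_def)
  have "integrable M (\<lambda>x. \<bar>f x + g x\<bar> powr p)"
    by (rule Bochner_Integration.integrable_bound[OF integrable_convex_bound])
      (use abs_add_powr_le_convex[OF p e] in auto)
  then show ?thesis
    by (simp add: Lp_space_def)
qed

lemma Lp_norm_add_powr_le:
  "Lp_norm M p (\<lambda>x. f x + g x) powr p
     \<le> (1 - e) powr (1 - p) * Lp_norm M p f powr p + e powr (1 - p) * Lp_norm M p g powr p"
proof -
  have "(\<integral>x. \<bar>f x + g x\<bar> powr p \<partial>M)
      \<le> (\<integral>x. (1 - e) powr (1 - p) * \<bar>f x\<bar> powr p + e powr (1 - p) * \<bar>g x\<bar> powr p \<partial>M)"
    using Lp_space_add integrable_convex_bound abs_add_powr_le_convex[OF p e]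
    by (intro integral_mono) (auto simp: Lp_space_def)
  then show ?thesis
    using f g p by (simp add: Lp_norm_powr Lp_space_def)
qed

end

lemma Lp_space_diff:
  assumes "f \<in> Lp_space M p" "g \<in> Lp_space M p" "p \<ge> 1"
  shows "(\<lambda>x. f x - g x) \<in> Lp_space M p"
  using Lp_space_add[of f M p "\<lambda>x. - g x" "1/2"] assms by (auto simp: Lp_space_def)

lemma Lp_norm_powr_le_split:
  assumes f: "f \<in> Lp_space M p" and g: "g \<in> Lp_space M p" and p: "p \<ge> 1" and e: "0 < e" "e < 1"
  shows "Lp_norm M p g powr p
    \<le> (1 - e) powr (1 - p) * Lp_norm M p f powr p + e powr (1 - p) * Lp_norm M p (\<lambda>x. f x - g x) powr p"
  using Lp_norm_add_powr_le[OF f Lp_space_diff[OF g f p] p e]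
  by (simp add: Lp_norm_diff_commute[of _ _ f g])

lemma Lp_norm_powr_ge_split:
  assumes f: "f \<in> Lp_space M p" and g: "g \<in> Lp_space M p" and p: "p \<ge> 1" and e: "0 < e" "e < 1"
  shows "(1 - e) powr (p - 1) * (Lp_norm M p f powr p - e powr (1 - p) * Lp_norm M p (\<lambda>x. f x - g x) powr p)
    \<le> Lp_norm M p g powr p"
proof -
  have "Lp_norm M p f powr p - e powr (1 - p) * Lp_norm M p (\<lambda>x. f x - g x) powr p
      \<le> (1 - e) powr (1 - p) * Lp_norm M p g powr p"
    using Lp_norm_powr_le_split[OF g f p e] by (simp add: Lp_norm_diff_commute[of _ _ g f])
  then have "(1 - e) powr (p - 1) * (Lp_norm M p f powr p - e powr (1 - p) * Lp_norm M p (\<lambda>x. f x - g x) powr p)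
      \<le> ((1 - e) powr (p - 1) * (1 - e) powr (1 - p)) * Lp_norm M p g powr p"
    unfolding mult.assoc by (intro mult_left_mono) auto
  also have "(1 - e) powr (p - 1) * (1 - e) powr (1 - p) = 1"
    using e by (simp add: powr_add[symmetric])
  finally show ?thesis
    by simp
qed

lemma nn_integral_dominated_convergence_at_top:
  fixes s :: "real \<Rightarrow> 'a \<Rightarrow> ennreal"
  assumes [measurable]: "\<And>t. s t \<in> borel_measurable M" "f \<in> borel_measurable M" "w \<in> borel_measurable M"
    and w: "integral\<^sup>N M w < \<infinity>"
    and lim: "AE x in M. ((\<lambda>t. s t x) \<longlongrightarrow> f x) at_top"
    and bound: "\<forall>\<^sub>F t in at_top. AE x in M. s t x \<le> w x"
  shows "((\<lambda>t. integral\<^sup>N M (s t)) \<longlongrightarrow> integral\<^sup>N M f) at_top"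
proof (rule tendsto_at_topI_sequentially)
  fix X :: "nat \<Rightarrow> real" assume X: "filterlim X at_top sequentially"
  from filterlim_iff[THEN iffD1, OF this, rule_format, OF bound]
  obtain N where N: "\<And>n. N \<le> n \<Longrightarrow> AE x in M. s (X n) x \<le> w x"
    by (auto simp: eventually_sequentially)
  show "(\<lambda>n. integral\<^sup>N M (s (X n))) \<longlonglongrightarrow> integral\<^sup>N M f"
  proof (rule LIMSEQ_offset, rule nn_integral_dominated_convergence)
    show "AE x in M. s (X (n + N)) x \<le> w x" for n
      by (rule N) simp
    show "AE x in M. (\<lambda>n. s (X (n + N)) x) \<longlonglongrightarrow> f x"
      using lim by eventually_elim (intro LIMSEQ_ignore_initial_segment filterlim_compose[OF _ X])
  qed (use w in simp_all)
qed

text \<open>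
  The approximation errors below have the form \<open>F e d\<close> with \<open>d = \<parallel>f - g\<parallel>\<^sup>p\<close>; they blow up as
  \<open>e \<rightarrow> 0\<close> for fixed d > 0, so e has to be chosen before d is made small.
\<close>

lemma obtain_two_step_parameters:
  fixes F :: "real \<Rightarrow> real \<Rightarrow> real"
  assumes lim0: "((\<lambda>e. F e 0) \<longlongrightarrow> A) (at_right 0)"
    and cont: "\<And>e. 0 < e \<Longrightarrow> (F e \<longlongrightarrow> F e 0) (at_right 0)"
    and y: "A < y"
  obtains e \<delta> where "0 < e" "e < 1" "0 < \<delta>" "\<And>d. 0 \<le> d \<Longrightarrow> d < \<delta> \<Longrightarrow> F e d < y"
proof -
  have "\<forall>\<^sub>F e in at_right (0::real). e < 1 \<and> 0 < e"
    by (rule eventually_at_rightI[of 0 1]) auto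
  with order_tendstoD(2)[OF lim0 y] have "\<forall>\<^sub>F e in at_right 0. F e 0 < y \<and> e < 1 \<and> 0 < e"
    by (rule eventually_conj)
  then obtain e where e: "F e 0 < y" "e < 1" "0 < e"
    using eventually_happens by force
  have "\<forall>\<^sub>F d in at_right 0. F e d < y"
    using order_tendstoD(2)[OF cont[OF e(3)] e(1)] .
  then obtain \<delta> where \<delta>: "0 < \<delta>" "\<And>d. 0 < d \<Longrightarrow> d < \<delta> \<Longrightarrow> F e d < y"
    unfolding eventually_at_right_field by auto
  show ?thesis
    by (rule that[OF e(3) e(2) \<delta>(1)]) (use e(1) \<delta>(2) in \<open>force simp: le_less\<close>)
qed

section \<open>Families of operators with a maximal inequality\<close>

lemma epow_mono: "a \<le> b \<Longrightarrow> p \<ge> 0 \<Longrightarrow> epow a p \<le> epow b p"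
  by (cases a; cases b) (auto simp: epow_def top_unique intro!: ennreal_leI powr_mono2)

lemma borel_measurable_epow [measurable]:
  assumes [measurable]: "f \<in> borel_measurable M"
  shows "(\<lambda>x. epow (f x) p) \<in> borel_measurable M"
  unfolding epow_def by measurable

lemma E_set_split:
  assumes sub: "0 < t \<Longrightarrow> \<bar>T t f x\<bar> \<le> \<bar>T t g x\<bar> + \<bar>T t h x\<bar>"
    and E: "(x, t) \<in> E_set T f lam s"
  shows "(x, t) \<in> E_set T g ((1 - e) * lam) s \<or> (x, t) \<in> E_set T h (e * lam) s"
proof -
  from E have t: "0 < t" and less: "lam * t powr s < \<bar>T t f x\<bar>"
    by (auto simp: E_set_def)
  have "(1 - e) * lam * t powr s + e * lam * t powr s = lam * t powr s"
    by (simp add: algebra_simps)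
  with sub[OF t] less t show ?thesis
    by (auto simp: E_set_def)
qed

lemma powr_neg_mult_powr_mult:
  fixes a lam p :: real
  assumes "a > 0" "lam \<ge> 0"
  shows "a powr (- p) * (a * lam) powr p = lam powr p"
proof -
  have "a powr (- p) * (a * lam) powr p = (a powr (- p) * a powr p) * lam powr p"
    using assms by (simp add: powr_mult)
  also have "a powr (- p) * a powr p = 1"
    using assms by (simp add: powr_add[symmetric])
  finally show ?thesis by simp
qed

locale maximal_operator_family =
  fixes M :: "'a measure" and T :: "real \<Rightarrow> ('a \<Rightarrow> real) \<Rightarrow> 'a \<Rightarrow> real"
    and p \<gamma> C :: real
  assumes sigma_finite: "sigma_finite_measure M"
    and p: "1 < p"
    and gamma: "\<gamma> > 0"
    and subadd: "\<And>f h t. f \<in> Lp_space M p \<Longrightarrow> h \<in> Lp_space M p \<Longrightarrow> t > 0 \<Longrightarrow>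
        AE x in M. \<bar>T t (\<lambda>y. f y + h y) x\<bar> \<le> \<bar>T t f x\<bar> + \<bar>T t h x\<bar>"
    and meas: "\<And>f. f \<in> Lp_space M p \<Longrightarrow>
        (\<lambda>(x, t). T t f x) \<in> borel_measurable (M \<Otimes>\<^sub>M restrict_space lborel {0<..})"
    and C_pos: "C > 0"
    and maximal: "\<And>f. f \<in> Lp_space M p \<Longrightarrow>
        (\<integral>\<^sup>+ x. epow (maximal_fun T f x) p \<partial>M) \<le> ennreal ((C * Lp_norm M p f) powr p)"
begin

definition level_density :: "('a \<Rightarrow> real) \<Rightarrow> real \<Rightarrow> 'a \<times> real \<Rightarrow> ennreal" where
  "level_density h lam z = indicator (E_set T h lam (\<gamma> / p)) z * ennreal (snd z powr (\<gamma> - 1))"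

lemma borel_measurable_level_density:
  assumes h: "h \<in> Lp_space M p"
  shows "level_density h lam \<in> borel_measurable (M \<Otimes>\<^sub>M lborel)"
proof -
  note [measurable] = measurable_extend_to_nonpositive[OF meas[OF h]]
  have "level_density h lam = (\<lambda>z. (if 0 < snd z \<and> lam * snd z powr (\<gamma> / p) <
          \<bar>T (if 0 < snd z then snd z else 1) h (fst z)\<bar> then 1 else 0) * ennreal (snd z powr (\<gamma> - 1)))"
    by (auto simp: level_density_def E_set_def indicator_def fun_eq_iff)
  also have "\<dots> \<in> borel_measurable (M \<Otimes>\<^sub>M lborel)"
    by measurable
  finally show ?thesis .
qed

lemma level_integral_line_eq:
  "level_integral_line p \<gamma> (\<lambda>t. T t h x) lam = ennreal (lam powr p) * (\<integral>\<^sup>+t. level_density h lam (x, t) \<partial>lborel)"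
  unfolding level_integral_line_def level_density_def
  by (simp add: E_set_def indicator_def)

lemma borel_measurable_level_integral_line:
  assumes h: "h \<in> Lp_space M p"
  shows "(\<lambda>x. level_integral_line p \<gamma> (\<lambda>t. T t h x) lam) \<in> borel_measurable M"
  unfolding level_integral_line_eq
  using lborel.borel_measurable_nn_integral_fst[OF borel_measurable_level_density[OF h]] by measurable

lemma level_integral_eq_iterated:
  "level_integral M T h p \<gamma> lam = ennreal (lam powr p) * (\<integral>\<^sup>+x. \<integral>\<^sup>+t. level_density h lam (x, t) \<partial>lborel \<partial>M)"
  by (simp add: level_integral_def level_density_def)

lemma level_integral_eq_nn_integral_line:
  assumes h: "h \<in> Lp_space M p"
  shows "level_integral M T h p \<gamma> lam = (\<integral>\<^sup>+x. level_integral_line p \<gamma> (\<lambda>t. T t h x) lam \<partial>M)"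
  unfolding level_integral_line_eq level_integral_eq_iterated
  by (rule nn_integral_cmult[symmetric])
    (rule lborel.borel_measurable_nn_integral_fst[OF borel_measurable_level_density[OF h]])

lemma level_integral_eq_pair:
  assumes h: "h \<in> Lp_space M p"
  shows "level_integral M T h p \<gamma> lam = ennreal (lam powr p) * integral\<^sup>N (M \<Otimes>\<^sub>M lborel) (level_density h lam)"
  unfolding level_integral_eq_iterated
  using lborel.nn_integral_fst[OF borel_measurable_level_density[OF h]] by simp

lemma level_integral_line_le_ess_bound:
  assumes h: "h \<in> Lp_space M p" and x: "x \<in> space M" and lam: "lam > 0"
  shows "level_integral_line p \<gamma> (\<lambda>t. T t h x) lam \<le> ennreal (1 / \<gamma>) * epow (ess_bound (\<lambda>x t. T t h x) x) p"
proof (cases "ess_bound (\<lambda>x t. T t h x) x < \<infinity>")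
  case True
  let ?b = "enn2real (ess_bound (\<lambda>x t. T t h x) x)"
  have "level_integral_line p \<gamma> (\<lambda>t. T t h x) lam \<le> ennreal (?b powr p / \<gamma>)"
    using AE_abs_le_ess_bound[OF meas[OF h] x True] p gamma lam
    by (intro level_integral_line_le) (auto elim!: eventually_mono)
  also have "\<dots> = ennreal (1 / \<gamma>) * epow (ess_bound (\<lambda>x t. T t h x) x) p"
    using True gamma by (simp add: epow_def ennreal_mult[symmetric])
  finally show ?thesis .
next
  case False
  then show ?thesis
    using gamma by (simp add: epow_def ennreal_mult_top top.not_eq_extremum)
qed

lemma nn_integral_epow_ess_bound_le:
  assumes h: "h \<in> Lp_space M p"
  shows "(\<integral>\<^sup>+x. epow (ess_bound (\<lambda>x t. T t h x) x) p \<partial>M) \<le> ennreal ((C * Lp_norm M p h) powr p)"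
proof -
  have "(\<integral>\<^sup>+x. epow (ess_bound (\<lambda>x t. T t h x) x) p \<partial>M) \<le> (\<integral>\<^sup>+x. epow (maximal_fun T h x) p \<partial>M)"
    using ess_bound_le_SUP p by (intro nn_integral_mono epow_mono) (auto simp: maximal_fun_def)
  also have "\<dots> \<le> ennreal ((C * Lp_norm M p h) powr p)"
    by (rule maximal[OF h])
  finally show ?thesis .
qed

lemma AE_ess_bound_finite:
  assumes h: "h \<in> Lp_space M p"
  shows "AE x in M. ess_bound (\<lambda>x t. T t h x) x < \<infinity>"
proof -
  have "AE x in M. epow (ess_bound (\<lambda>x t. T t h x) x) p \<noteq> \<infinity>"
    using nn_integral_epow_ess_bound_le[OF h] borel_measurable_ess_bound[OF meas[OF h]]
    by (intro nn_integral_PInf_AE) (auto simp: top.not_eq_extremum intro: le_less_trans)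
  then show ?thesis
    by eventually_elim (auto simp: epow_def top.not_eq_extremum split: if_splits)
qed

lemma level_integral_le:
  assumes h: "h \<in> Lp_space M p" and lam: "lam > 0"
  shows "level_integral M T h p \<gamma> lam \<le> ennreal (C powr p / \<gamma> * Lp_norm M p h powr p)"
proof -
  have "level_integral M T h p \<gamma> lam \<le> (\<integral>\<^sup>+x. ennreal (1 / \<gamma>) * epow (ess_bound (\<lambda>x t. T t h x) x) p \<partial>M)"
    unfolding level_integral_eq_nn_integral_line[OF h]
    using level_integral_line_le_ess_bound[OF h _ lam] by (intro nn_integral_mono) simp
  also have "\<dots> = ennreal (1 / \<gamma>) * (\<integral>\<^sup>+x. epow (ess_bound (\<lambda>x t. T t h x) x) p \<partial>M)"
    using borel_measurable_ess_bound[OF meas[OF h]] by (intro nn_integral_cmult) measurable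
  also have "\<dots> \<le> ennreal (1 / \<gamma>) * ennreal ((C * Lp_norm M p h) powr p)"
    by (intro mult_left_mono nn_integral_epow_ess_bound_le[OF h]) simp
  also have "\<dots> = ennreal (C powr p / \<gamma> * Lp_norm M p h powr p)"
    using C_pos gamma by (simp add: powr_mult Lp_norm_def ennreal_mult[symmetric])
  finally show ?thesis .
qed

lemma tendsto_level_integral_of_convergent:
  assumes g: "g \<in> Lp_space M p" and conv: "AE x in M. ((\<lambda>t. T t g x) \<longlongrightarrow> g x) (at_right 0)"
  shows "(level_integral M T g p \<gamma> \<longlongrightarrow> ennreal (Lp_norm M p g powr p / \<gamma>)) at_top"
proof -
  have [measurable]: "g \<in> borel_measurable M"
    using g by (simp add: Lp_space_def)
  have w: "(\<lambda>x. ennreal (1 / \<gamma>) * epow (ess_bound (\<lambda>x t. T t g x) x) p) \<in> borel_measurable M"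
    using borel_measurable_ess_bound[OF meas[OF g]] by measurable
  have "((\<lambda>lam. \<integral>\<^sup>+x. level_integral_line p \<gamma> (\<lambda>t. T t g x) lam \<partial>M)
          \<longlongrightarrow> (\<integral>\<^sup>+x. ennreal (\<bar>g x\<bar> powr p / \<gamma>) \<partial>M)) at_top"
  proof (rule nn_integral_dominated_convergence_at_top[OF borel_measurable_level_integral_line[OF g] _ w])
    show "(\<integral>\<^sup>+x. ennreal (1 / \<gamma>) * epow (ess_bound (\<lambda>x t. T t g x) x) p \<partial>M) < \<infinity>"
      using nn_integral_epow_ess_bound_le[OF g] borel_measurable_ess_bound[OF meas[OF g]]
      by (subst nn_integral_cmult) (auto simp: ennreal_mult_less_top intro: le_less_trans)
    show "AE x in M. ((\<lambda>lam. level_integral_line p \<gamma> (\<lambda>t. T t g x) lam) \<longlongrightarrow> ennreal (\<bar>g x\<bar> powr p / \<gamma>)) at_top"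
      using conv AE_ess_bound_finite[OF g] AE_space
    proof eventually_elim
      case (elim x)
      then show ?case
        using p gamma AE_abs_le_ess_bound[OF meas[OF g]] by (intro tendsto_level_integral_line) auto
    qed
    show "\<forall>\<^sub>F lam in at_top. AE x in M. level_integral_line p \<gamma> (\<lambda>t. T t g x) lam
        \<le> ennreal (1 / \<gamma>) * epow (ess_bound (\<lambda>x t. T t g x) x) p"
      using eventually_gt_at_top[of 0]
      by eventually_elim (auto intro: AE_I2 level_integral_line_le_ess_bound[OF g])
  qed measurable
  moreover have "(\<integral>\<^sup>+x. ennreal (\<bar>g x\<bar> powr p / \<gamma>) \<partial>M) = ennreal (Lp_norm M p g powr p / \<gamma>)"
    using g p gamma by (subst nn_integral_eq_integral) (auto simp: Lp_space_def Lp_norm_powr)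
  moreover have "level_integral M T g p \<gamma> = (\<lambda>lam. \<integral>\<^sup>+x. level_integral_line p \<gamma> (\<lambda>t. T t g x) lam \<partial>M)"
    using level_integral_eq_nn_integral_line[OF g] by (rule ext)
  ultimately show ?thesis
    by simp
qed

lemma level_density_split:
  assumes "0 < t \<longrightarrow> \<bar>T t f x\<bar> \<le> \<bar>T t g x\<bar> + \<bar>T t h x\<bar>"
  shows "level_density f lam (x, t) \<le> level_density g ((1 - e) * lam) (x, t) + level_density h (e * lam) (x, t)"
  using E_set_split[of t T f x g h lam "\<gamma> / p" e] assms
  by (auto simp: level_density_def indicator_def)

lemma level_integral_split:
  assumes f: "f \<in> Lp_space M p" and g: "g \<in> Lp_space M p" and e: "0 < e" "e < 1" and lam: "lam > 0"
  shows "level_integral M T f p \<gamma> lam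
    \<le> ennreal ((1 - e) powr (- p)) * level_integral M T g p \<gamma> ((1 - e) * lam)
      + ennreal (e powr (- p)) * level_integral M T (\<lambda>x. f x - g x) p \<gamma> (e * lam)"
proof -
  define h where "h = (\<lambda>x. f x - g x)"
  have h: "h \<in> Lp_space M p"
    unfolding h_def using Lp_space_diff[OF f g] p by simp
  interpret pair_sigma_finite M lborel
    using sigma_finite sigma_finite_lborel by (simp add: pair_sigma_finite_def)
  note [measurable] = borel_measurable_level_density[OF f] borel_measurable_level_density[OF g]
    borel_measurable_level_density[OF h]
  let ?F = "level_density f lam" and ?G = "level_density g ((1 - e) * lam)" and ?H = "level_density h (e * lam)"
  have pointwise: "AE x in M. ?F (x, t) \<le> ?G (x, t) + ?H (x, t)" for t
  proof -
    have "(\<lambda>y. g y + h y) = f"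
      by (simp add: h_def)
    then have "AE x in M. 0 < t \<longrightarrow> \<bar>T t f x\<bar> \<le> \<bar>T t g x\<bar> + \<bar>T t h x\<bar>"
      using subadd[OF g h] by (cases "0 < t") auto
    then show ?thesis
      by eventually_elim (rule level_density_split)
  qed
  have "integral\<^sup>N (M \<Otimes>\<^sub>M lborel) ?F = (\<integral>\<^sup>+t. \<integral>\<^sup>+x. ?F (x, t) \<partial>M \<partial>lborel)"
    by (rule nn_integral_snd[symmetric]) measurable
  also have "\<dots> \<le> (\<integral>\<^sup>+t. \<integral>\<^sup>+x. ?G (x, t) + ?H (x, t) \<partial>M \<partial>lborel)"
    by (rule nn_integral_mono, rule nn_integral_mono_AE, rule pointwise)
  also have "\<dots> = integral\<^sup>N (M \<Otimes>\<^sub>M lborel) (\<lambda>z. ?G z + ?H z)"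
    by (rule nn_integral_snd) measurable
  also have "\<dots> = integral\<^sup>N (M \<Otimes>\<^sub>M lborel) ?G + integral\<^sup>N (M \<Otimes>\<^sub>M lborel) ?H"
    using borel_measurable_level_density[OF g] borel_measurable_level_density[OF h]
    by (rule nn_integral_add)
  finally have le: "ennreal (lam powr p) * integral\<^sup>N (M \<Otimes>\<^sub>M lborel) ?F
      \<le> ennreal (lam powr p) * integral\<^sup>N (M \<Otimes>\<^sub>M lborel) ?G + ennreal (lam powr p) * integral\<^sup>N (M \<Otimes>\<^sub>M lborel) ?H"
    unfolding distrib_left[symmetric] by (rule mult_left_mono) simp
  have "ennreal (lam powr p) * integral\<^sup>N (M \<Otimes>\<^sub>M lborel) ?G = ennreal ((1 - e) powr (- p)) * level_integral M T g p \<gamma> ((1 - e) * lam)"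
    using e lam unfolding level_integral_eq_pair[OF g]
    by (simp add: powr_neg_mult_powr_mult mult.assoc[symmetric] ennreal_mult[symmetric])
  moreover have "ennreal (lam powr p) * integral\<^sup>N (M \<Otimes>\<^sub>M lborel) ?H = ennreal (e powr (- p)) * level_integral M T h p \<gamma> (e * lam)"
    using e lam unfolding level_integral_eq_pair[OF h]
    by (simp add: powr_neg_mult_powr_mult mult.assoc[symmetric] ennreal_mult[symmetric])
  ultimately have "level_integral M T f p \<gamma> lam
    \<le> ennreal ((1 - e) powr (- p)) * level_integral M T g p \<gamma> ((1 - e) * lam)
      + ennreal (e powr (- p)) * level_integral M T h p \<gamma> (e * lam)"
    using le unfolding level_integral_eq_pair[OF f] by simp
  then show ?thesis
    by (simp add: h_def)
qed

abbreviation level_value :: "('a \<Rightarrow> real) \<Rightarrow> real \<Rightarrow> real" where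
  "level_value h lam \<equiv> enn2real (level_integral M T h p \<gamma> lam)"

lemma level_integral_eq_ennreal:
  assumes h: "h \<in> Lp_space M p" and lam: "lam > 0"
  shows "level_integral M T h p \<gamma> lam = ennreal (level_value h lam)"
proof -
  have "level_integral M T h p \<gamma> lam < \<infinity>"
    using level_integral_le[OF h lam] by (rule le_less_trans) simp
  then show ?thesis
    by simp
qed

lemma level_value_split:
  assumes f: "f \<in> Lp_space M p" and g: "g \<in> Lp_space M p" and e: "0 < e" "e < 1" and lam: "lam > 0"
  shows "level_value f lam \<le> (1 - e) powr (- p) * level_value g ((1 - e) * lam)
      + e powr (- p) * (C powr p / \<gamma> * Lp_norm M p (\<lambda>x. f x - g x) powr p)"
proof -
  have fg: "(\<lambda>x. f x - g x) \<in> Lp_space M p"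
    using Lp_space_diff[OF f g] p by simp
  have "level_integral M T f p \<gamma> lam
      \<le> ennreal ((1 - e) powr (- p)) * level_integral M T g p \<gamma> ((1 - e) * lam)
        + ennreal (e powr (- p)) * level_integral M T (\<lambda>x. f x - g x) p \<gamma> (e * lam)"
    by (rule level_integral_split[OF f g e lam])
  also have "\<dots> \<le> ennreal ((1 - e) powr (- p)) * level_integral M T g p \<gamma> ((1 - e) * lam)
        + ennreal (e powr (- p)) * ennreal (C powr p / \<gamma> * Lp_norm M p (\<lambda>x. f x - g x) powr p)"
    by (rule add_left_mono, rule mult_left_mono, rule level_integral_le[OF fg]) (use e lam in auto)
  also have "\<dots> = ennreal ((1 - e) powr (- p) * level_value g ((1 - e) * lam)
      + e powr (- p) * (C powr p / \<gamma> * Lp_norm M p (\<lambda>x. f x - g x) powr p))"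
    using e lam gamma by (subst level_integral_eq_ennreal[OF g]) (simp_all add: ennreal_mult[symmetric] ennreal_plus[symmetric] del: ennreal_plus)
  finally show ?thesis
    using gamma by (subst (asm) level_integral_eq_ennreal[OF f lam]) (simp add: ennreal_le_iff del: ennreal_plus)
qed

lemma level_value_split_rescaled:
  assumes f: "f \<in> Lp_space M p" and g: "g \<in> Lp_space M p" and e: "0 < e" "e < 1" and lam: "lam > 0"
  shows "(1 - e) powr p * (level_value g (lam / (1 - e))
      - e powr (- p) * (C powr p / \<gamma> * Lp_norm M p (\<lambda>x. f x - g x) powr p)) \<le> level_value f lam"
proof -
  have "level_value g (lam / (1 - e)) \<le> (1 - e) powr (- p) * level_value f lam
      + e powr (- p) * (C powr p / \<gamma> * Lp_norm M p (\<lambda>x. f x - g x) powr p)"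
    using level_value_split[OF g f e, of "lam / (1 - e)"] lam e
    by (simp add: Lp_norm_diff_commute[of _ _ g f])
  then have "(1 - e) powr p * (level_value g (lam / (1 - e))
      - e powr (- p) * (C powr p / \<gamma> * Lp_norm M p (\<lambda>x. f x - g x) powr p))
      \<le> ((1 - e) powr p * (1 - e) powr (- p)) * level_value f lam"
    unfolding mult.assoc by (intro mult_left_mono) auto
  also have "(1 - e) powr p * (1 - e) powr (- p) = 1"
    using e by (simp add: powr_add[symmetric])
  finally show ?thesis
    by simp
qed

lemma tendsto_level_value_of_convergent:
  assumes g: "g \<in> Lp_space M p" and conv: "AE x in M. ((\<lambda>t. T t g x) \<longlongrightarrow> g x) (at_right 0)"
  shows "(level_value g \<longlongrightarrow> Lp_norm M p g powr p / \<gamma>) at_top"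
  using tendsto_enn2real[OF tendsto_level_integral_of_convergent[OF g conv]] gamma by simp

context
  fixes f :: "'a \<Rightarrow> real" and D :: "('a \<Rightarrow> real) set"
  assumes f: "f \<in> Lp_space M p"
    and D_sub: "D \<subseteq> Lp_space M p"
    and D_dense: "\<And>\<epsilon>. \<epsilon> > 0 \<Longrightarrow> \<exists>g\<in>D. Lp_norm M p (\<lambda>x. f x - g x) < \<epsilon>"
    and D_conv: "\<And>g. g \<in> D \<Longrightarrow> AE x in M. ((\<lambda>t. T t g x) \<longlongrightarrow> g x) (at_right 0)"
begin

lemma obtain_convergent_approximant:
  assumes \<delta>: "\<delta> > 0"
  obtains g where "g \<in> Lp_space M p" "(level_value g \<longlongrightarrow> Lp_norm M p g powr p / \<gamma>) at_top"
    "Lp_norm M p (\<lambda>x. f x - g x) powr p < \<delta>"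
proof -
  obtain g where g: "g \<in> D" and close: "Lp_norm M p (\<lambda>x. f x - g x) < \<delta> powr (1 / p)"
    using D_dense[of "\<delta> powr (1 / p)"] \<delta> by auto
  have "Lp_norm M p (\<lambda>x. f x - g x) powr p < (\<delta> powr (1 / p)) powr p"
    using close p by (intro powr_less_mono2) (auto simp: Lp_norm_def)
  also have "\<dots> = \<delta>"
    using \<delta> p by (simp add: powr_powr)
  finally show ?thesis
    using g D_sub D_conv by (intro that tendsto_level_value_of_convergent) auto
qed

lemma eventually_level_value_less:
  assumes y: "Lp_norm M p f powr p / \<gamma> < y"
  shows "\<forall>\<^sub>F lam in at_top. level_value f lam < y"
proof -
  define N where "N = Lp_norm M p f powr p"
  define K where "K = C powr p / \<gamma>"
  \<comment> \<open>The split inequality at g, with \<open>\<parallel>g\<parallel>\<^sup>p \<le> (1-e)\<^bsup>1-p\<^esup> N + e\<^bsup>1-p\<^esup> d\<close> by convexity.\<close>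
  define U where "U e d = (1 - e) powr (- p) * (((1 - e) powr (1 - p) * N + e powr (1 - p) * d) / \<gamma>)
      + e powr (- p) * (K * d)" for e d
  have "((\<lambda>e. (1 - e) powr (- p) * ((1 - e) powr (1 - p) * N / \<gamma>)) \<longlongrightarrow> N / \<gamma>) (at_right 0)"
    using gamma by (auto intro!: tendsto_eq_intros)
  then have lim0: "((\<lambda>e. U e 0) \<longlongrightarrow> N / \<gamma>) (at_right 0)"
    by (simp add: U_def)
  have cont: "(U e \<longlongrightarrow> U e 0) (at_right 0)" if "0 < e" for e
    unfolding U_def using gamma by (intro tendsto_intros) auto
  obtain e \<delta> where e: "0 < e" "e < 1" and \<delta>: "0 < \<delta>" and U_less: "\<And>d. 0 \<le> d \<Longrightarrow> d < \<delta> \<Longrightarrow> U e d < y"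
    using obtain_two_step_parameters[OF lim0 cont, of y] y by (auto simp: N_def)
  obtain g where g: "g \<in> Lp_space M p" and g_lim: "(level_value g \<longlongrightarrow> Lp_norm M p g powr p / \<gamma>) at_top"
    and close: "Lp_norm M p (\<lambda>x. f x - g x) powr p < \<delta>"
    by (rule obtain_convergent_approximant[OF \<delta>])
  define d where "d = Lp_norm M p (\<lambda>x. f x - g x) powr p"
  have g_norm: "Lp_norm M p g powr p \<le> (1 - e) powr (1 - p) * N + e powr (1 - p) * d"
    unfolding N_def d_def using Lp_norm_powr_le_split[OF f g _ e] p by simp
  have "filterlim (\<lambda>lam. (1 - e) * lam) at_top at_top"
    using e by (intro filterlim_tendsto_pos_mult_at_top[OF tendsto_const] filterlim_ident) auto
  then have lim: "((\<lambda>lam. (1 - e) powr (- p) * level_value g ((1 - e) * lam) + e powr (- p) * (K * d))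
      \<longlongrightarrow> (1 - e) powr (- p) * (Lp_norm M p g powr p / \<gamma>) + e powr (- p) * (K * d)) at_top"
    by (intro tendsto_intros filterlim_compose[OF g_lim])
  have le: "(1 - e) powr (- p) * (Lp_norm M p g powr p / \<gamma>) + e powr (- p) * (K * d) \<le> U e d"
    unfolding U_def using g_norm gamma by (intro add_right_mono mult_left_mono divide_right_mono) auto
  have less: "U e d < y"
    using close by (intro U_less) (auto simp: d_def)
  from eventually_gt_at_top[of 0] order_tendstoD(2)[OF lim le_less_trans[OF le less]]
  show ?thesis
  proof eventually_elim
    case (elim lam)
    with level_value_split[OF f g e, of lam] show ?case
      by (simp add: K_def d_def)
  qed
qed

lemma eventually_level_value_greater:
  assumes y: "y < Lp_norm M p f powr p / \<gamma>"
  shows "\<forall>\<^sub>F lam in at_top. y < level_value f lam"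
proof -
  define N where "N = Lp_norm M p f powr p"
  define K where "K = C powr p / \<gamma>"
  \<comment> \<open>The split inequality with f and g exchanged, with \<open>(1-e)\<^bsup>p-1\<^esup> (N - e\<^bsup>1-p\<^esup> d) \<le> \<parallel>g\<parallel>\<^sup>p\<close>.\<close>
  define L where "L e d = (1 - e) powr p * ((1 - e) powr (p - 1) * (N - e powr (1 - p) * d) / \<gamma> - e powr (- p) * (K * d))"
    for e d
  have "((\<lambda>e. - ((1 - e) powr p * ((1 - e) powr (p - 1) * N / \<gamma>))) \<longlongrightarrow> - (N / \<gamma>)) (at_right 0)"
    using gamma by (auto intro!: tendsto_eq_intros)
  then have lim0: "((\<lambda>e. - L e 0) \<longlongrightarrow> - (N / \<gamma>)) (at_right 0)"
    by (simp add: L_def)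
  have cont: "((\<lambda>d. - L e d) \<longlongrightarrow> - L e 0) (at_right 0)" if "0 < e" for e
    unfolding L_def using gamma by (intro tendsto_intros) auto
  obtain e \<delta> where e: "0 < e" "e < 1" and \<delta>: "0 < \<delta>" and L_greater: "\<And>d. 0 \<le> d \<Longrightarrow> d < \<delta> \<Longrightarrow> - L e d < - y"
    using obtain_two_step_parameters[OF lim0 cont, of "- y"] y by (auto simp: N_def)
  obtain g where g: "g \<in> Lp_space M p" and g_lim: "(level_value g \<longlongrightarrow> Lp_norm M p g powr p / \<gamma>) at_top"
    and close: "Lp_norm M p (\<lambda>x. f x - g x) powr p < \<delta>"
    by (rule obtain_convergent_approximant[OF \<delta>])
  define d where "d = Lp_norm M p (\<lambda>x. f x - g x) powr p"
  have g_norm: "(1 - e) powr (p - 1) * (N - e powr (1 - p) * d) \<le> Lp_norm M p g powr p"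
    unfolding N_def d_def using Lp_norm_powr_ge_split[OF f g _ e] p by simp
  have "filterlim (\<lambda>lam. lam / (1 - e)) at_top at_top"
    using filterlim_tendsto_pos_mult_at_top[OF tendsto_const _ filterlim_ident, of "1 / (1 - e)"] e
    by simp
  then have lim: "((\<lambda>lam. (1 - e) powr p * (level_value g (lam / (1 - e)) - e powr (- p) * (K * d)))
      \<longlongrightarrow> (1 - e) powr p * (Lp_norm M p g powr p / \<gamma> - e powr (- p) * (K * d))) at_top"
    by (intro tendsto_intros filterlim_compose[OF g_lim])
  have le: "L e d \<le> (1 - e) powr p * (Lp_norm M p g powr p / \<gamma> - e powr (- p) * (K * d))"
    unfolding L_def using g_norm gamma by (intro mult_left_mono diff_right_mono divide_right_mono) auto
  have greater: "y < L e d"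
    using L_greater[of d] close by (auto simp: d_def)
  from eventually_gt_at_top[of 0] order_tendstoD(1)[OF lim less_le_trans[OF greater le]]
  show ?thesis
  proof eventually_elim
    case (elim lam)
    then show ?case
      using level_value_split_rescaled[OF f g e elim(1)] unfolding K_def d_def by linarith
  qed
qed

lemma tendsto_level_integral_of_dense:
  "(level_integral M T f p \<gamma> \<longlongrightarrow> ennreal (Lp_norm M p f powr p / \<gamma>)) at_top"
proof -
  have "(level_value f \<longlongrightarrow> Lp_norm M p f powr p / \<gamma>) at_top"
    using eventually_level_value_greater eventually_level_value_less by (rule order_tendstoI)
  then have "((\<lambda>lam. ennreal (level_value f lam)) \<longlongrightarrow> ennreal (Lp_norm M p f powr p / \<gamma>)) at_top"
    by (rule tendsto_ennrealI)
  moreover have "\<forall>\<^sub>F lam in at_top. ennreal (level_value f lam) = level_integral M T f p \<gamma> lam"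
    using eventually_gt_at_top[of 0] by eventually_elim (rule level_integral_eq_ennreal[OF f, symmetric])
  ultimately show ?thesis
    by (rule Lim_transform_eventually)
qed

end

end

theorem corollary2p1:
  fixes M :: "'a measure"
    and T :: "real \<Rightarrow> ('a \<Rightarrow> real) \<Rightarrow> 'a \<Rightarrow> real"
    and p \<gamma> C :: real
  assumes sigma: "sigma_finite_measure M"
    and p: "1 < p"
    and gamma: "\<gamma> > 0"
    and subadd: "\<And>f h t. f \<in> Lp_space M p \<Longrightarrow> h \<in> Lp_space M p \<Longrightarrow> t > 0 \<Longrightarrow>
        AE x in M. \<bar>T t (\<lambda>y. f y + h y) x\<bar> \<le> \<bar>T t f x\<bar> + \<bar>T t h x\<bar>"
    and homog: "\<And>f c t. f \<in> Lp_space M p \<Longrightarrow> t > 0 \<Longrightarrow>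
        AE x in M. \<bar>T t (\<lambda>y. c * f y) x\<bar> = \<bar>c\<bar> * \<bar>T t f x\<bar>"
    and meas: "\<And>f. f \<in> Lp_space M p \<Longrightarrow>
        (\<lambda>(x, t). T t f x) \<in> borel_measurable (M \<Otimes>\<^sub>M restrict_space lborel {0<..})"
    and Cpos: "C > 0"
    and maximal: "\<And>f. f \<in> Lp_space M p \<Longrightarrow>
        (\<integral>\<^sup>+ x. epow (maximal_fun T f x) p \<partial>M) \<le> ennreal ((C * Lp_norm M p f) powr p)"
    and dense: "\<exists>D \<subseteq> Lp_space M p.
        (\<forall>f\<in>Lp_space M p. \<forall>\<epsilon>>0. \<exists>g\<in>D. Lp_norm M p (\<lambda>x. f x - g x) < \<epsilon>) \<and>
        (\<forall>g\<in>D. AE x in M. ((\<lambda>t. T t g x) \<longlongrightarrow> g x) (at_right 0))"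
    and f: "f \<in> Lp_space M p"
  shows "\<exists>L. (level_integral M T f p \<gamma> \<longlongrightarrow> L) at_top \<and>
           ennreal (Lp_norm M p f powr p / \<gamma>) \<le> L \<and>
           L \<le> (SUP lam\<in>{0<..}. level_integral M T f p \<gamma> lam) \<and>
           (SUP lam\<in>{0<..}. level_integral M T f p \<gamma> lam) \<le> ennreal (C powr p / \<gamma> * Lp_norm M p f powr p)"
proof -
  interpret maximal_operator_family M T p \<gamma> C
    by (rule maximal_operator_family.intro[OF sigma p gamma subadd meas Cpos maximal])
  obtain D where D: "D \<subseteq> Lp_space M p"
    "\<forall>f\<in>Lp_space M p. \<forall>\<epsilon>>0. \<exists>g\<in>D. Lp_norm M p (\<lambda>x. f x - g x) < \<epsilon>"
    "\<forall>g\<in>D. AE x in M. ((\<lambda>t. T t g x) \<longlongrightarrow> g x) (at_right 0)"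
    using dense by blast
  have lim: "(level_integral M T f p \<gamma> \<longlongrightarrow> ennreal (Lp_norm M p f powr p / \<gamma>)) at_top"
    using f D by (intro tendsto_level_integral_of_dense) auto
  have "ennreal (Lp_norm M p f powr p / \<gamma>) \<le> (SUP lam\<in>{0<..}. level_integral M T f p \<gamma> lam)"
  proof (rule tendsto_upperbound[OF lim])
    show "\<forall>\<^sub>F lam in at_top. level_integral M T f p \<gamma> lam \<le> (SUP lam\<in>{0<..}. level_integral M T f p \<gamma> lam)"
      using eventually_gt_at_top[of 0] by eventually_elim (auto intro: SUP_upper)
  qed simp
  moreover have "(SUP lam\<in>{0<..}. level_integral M T f p \<gamma> lam) \<le> ennreal (C powr p / \<gamma> * Lp_norm M p f powr p)"
    using level_integral_le[OF f] by (auto intro: SUP_least)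
  ultimately show ?thesis
    using lim by blast
qed

end
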